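(* Let $\mathrm{Fg}(K)$ be a function graph group with shifting action $\circ$ on $A\times B$, and let $Q\in K$. Then the standard complement $A_Q$ is a closed subgroup of $\mathrm{Fg}(K)$, and the orbits of $A_Q$ on $A\times B$ are exactly the level sets of the function $(x,y)\mapsto y-Q(x)$.
   Context: Let $A,B$ be finite abelian groups. The functions $A\to B$ form an abelian group under pointwise addition; for $t\in A$ the shift $a_t$ is $(a_tQ)(x)=Q(x-t)$. A function group is a subgroup $K$ of this group closed under all shifts. The function graph group $\mathrm{Fg}(K)=K\rtimes A$ has multiplication $(Q_1,t_1)(Q_2,t_2)=(Q_1+a_{t_1}Q_2,t_1+t_2)$ and acts on $A\times B$ by the shifting action $(Q,t)\circ(x,y)=(x+t,\,y+Q(x+t))$. For $Q\in K,t\in A$ put $a_{Q,t}=(Q-a_tQ,t)$ and $A_Q=\{a_{Q,t}:t\in A\}$ (a standard complement); $\mathcal{SC}=\{A_Q:Q\in K\}$. A subgroup $H$ is closed if every group element that maps each $H$-orbit onto itself lies in $H$. *)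

theory Defs
  imports "HOL-Algebra.Group"
begin

text \<open>A, B finite abelian groups are the types 'a and 'b. Functions A \<rightarrow> B form a group
  under pointwise addition.\<close>

definition shift :: "'a::ab_group_add \<Rightarrow> ('a \<Rightarrow> 'b) \<Rightarrow> ('a \<Rightarrow> 'b)" where
  "shift t Q = (\<lambda>x. Q (x - t))"

definition function_group ::
  "(('a::{finite,ab_group_add}) \<Rightarrow> ('b::{finite,ab_group_add})) set \<Rightarrow> bool" where
  "function_group K \<longleftrightarrow>
     (\<lambda>x. 0) \<in> K \<and>
     (\<forall>P\<in>K. \<forall>Q\<in>K. (\<lambda>x. P x + Q x) \<in> K) \<and>
     (\<forall>Q\<in>K. (\<lambda>x. - Q x) \<in> K) \<and>
     (\<forall>Q\<in>K. \<forall>t. shift t Q \<in> K)"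

definition Fg :: "(('a::{finite,ab_group_add}) \<Rightarrow> ('b::{finite,ab_group_add})) set
    \<Rightarrow> (('a \<Rightarrow> 'b) \<times> 'a) monoid" where
  "Fg K = \<lparr> carrier = K \<times> UNIV,
            mult = (\<lambda>(Q1, t1) (Q2, t2). ((\<lambda>x. Q1 x + shift t1 Q2 x), t1 + t2)),
            one = ((\<lambda>x. 0), 0) \<rparr>"

definition shift_act :: "(('a::ab_group_add) \<Rightarrow> ('b::ab_group_add)) \<times> 'a \<Rightarrow> 'a \<times> 'b \<Rightarrow> 'a \<times> 'b" where
  "shift_act g p = (case g of (Q, t) \<Rightarrow> case p of (x, y) \<Rightarrow> (x + t, y + Q (x + t)))"

definition orbit :: "((('a::ab_group_add) \<Rightarrow> ('b::ab_group_add)) \<times> 'a) set \<Rightarrow> 'a \<times> 'b \<Rightarrow> ('a \<times> 'b) set" where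
  "orbit H p = {shift_act h p | h. h \<in> H}"

definition aQ :: "(('a::ab_group_add) \<Rightarrow> ('b::ab_group_add)) \<Rightarrow> 'a \<Rightarrow> ('a \<Rightarrow> 'b) \<times> 'a" where
  "aQ Q t = ((\<lambda>x. Q x - shift t Q x), t)"

definition std_compl :: "(('a::ab_group_add) \<Rightarrow> ('b::ab_group_add)) \<Rightarrow> (('a \<Rightarrow> 'b) \<times> 'a) set" where
  "std_compl Q = {aQ Q t | t. True}"

definition closed_subgroup ::
  "(('a::{finite,ab_group_add}) \<Rightarrow> ('b::{finite,ab_group_add})) set \<Rightarrow> (('a \<Rightarrow> 'b) \<times> 'a) set \<Rightarrow> bool" where
  "closed_subgroup K H \<longleftrightarrow>
     (\<forall>g \<in> carrier (Fg K). (\<forall>p. shift_act g ` orbit H p = orbit H p) \<longrightarrow> g \<in> H)"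

end

theory Submission
  imports Defs
begin

(* Write level Q (x,y) = y - Q x.  Acting by (P,t) sends (x,y) to (x+t, y + P(x+t)),
   which changes the level by P(x+t) - Q(x+t) + Q x.  This is zero for all x exactly when
   P = Q - a_t Q, i.e. the elements of Fg(K) preserving the level function are
   precisely the a_{Q,t}.  Everything follows from this characterisation:
   - the A_Q-orbits are the level sets (a_{Q,t} moves x to any x+t inside its level set);
   - A_Q is closed (an element fixing every orbit set-wise preserves the level function);
   - A_Q is a subgroup since t \<mapsto> a_{Q,t} is a homomorphism A \<rightarrow> Fg(K).
   For the subgroup part we first show that Fg(K) is a group whenever K is a function
   group, so that inverses can be computed with the generic uniqueness of inverses. *)

lemma shift_apply [simp]: "shift t Q x = Q (x - t)"
  by (simp add: shift_def)

lemma function_group_zero: "function_group K \<Longrightarrow> (\<lambda>x. 0) \<in> K"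
  by (simp add: function_group_def)

lemma function_group_add:
  "function_group K \<Longrightarrow> P \<in> K \<Longrightarrow> R \<in> K \<Longrightarrow> (\<lambda>x. P x + R x) \<in> K"
  by (simp add: function_group_def)

lemma function_group_uminus: "function_group K \<Longrightarrow> P \<in> K \<Longrightarrow> (\<lambda>x. - P x) \<in> K"
  by (simp add: function_group_def)

lemma function_group_shift: "function_group K \<Longrightarrow> P \<in> K \<Longrightarrow> shift t P \<in> K"
  by (simp add: function_group_def)

lemma function_group_diff:
  assumes "function_group K" "P \<in> K" "R \<in> K"
  shows "(\<lambda>x. P x - R x) \<in> K"
  using function_group_add[OF assms(1,2) function_group_uminus[OF assms(1,3)]]
  by simp

lemma Fg_mult [simp]:
  "(P, s) \<otimes>\<^bsub>Fg K\<^esub> (R, t) = ((\<lambda>x. P x + R (x - s)), s + t)"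
  by (simp add: Fg_def)

lemma Fg_one [simp]: "\<one>\<^bsub>Fg K\<^esub> = ((\<lambda>x. 0), 0)"
  by (simp add: Fg_def)

lemma Fg_carrier [simp]: "(P, t) \<in> carrier (Fg K) \<longleftrightarrow> P \<in> K"
  by (simp add: Fg_def)

text \<open>The semidirect product \<open>K \<rtimes> A\<close> is a group; the inverse of \<open>(P,t)\<close> is
  \<open>(-a\<^sub>-\<^sub>t P, -t)\<close>.\<close>

theorem group_Fg:
  assumes K: "function_group K"
  shows "group (Fg K)"
proof (rule groupI)
  fix g h assume "g \<in> carrier (Fg K)" "h \<in> carrier (Fg K)"
  then show "g \<otimes>\<^bsub>Fg K\<^esub> h \<in> carrier (Fg K)"
    using function_group_add[OF K] function_group_shift[OF K]
    by (cases g, cases h) (fastforce simp: shift_def)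
next
  show "\<one>\<^bsub>Fg K\<^esub> \<in> carrier (Fg K)"
    using function_group_zero[OF K] by simp
next
  fix f g h :: "('a \<Rightarrow> 'b) \<times> 'a"
  show "f \<otimes>\<^bsub>Fg K\<^esub> g \<otimes>\<^bsub>Fg K\<^esub> h = f \<otimes>\<^bsub>Fg K\<^esub> (g \<otimes>\<^bsub>Fg K\<^esub> h)"
    by (cases f, cases g, cases h) (simp add: fun_eq_iff algebra_simps)
next
  fix g :: "('a \<Rightarrow> 'b) \<times> 'a"
  show "\<one>\<^bsub>Fg K\<^esub> \<otimes>\<^bsub>Fg K\<^esub> g = g"
    by (cases g) simp
next
  fix g assume g: "g \<in> carrier (Fg K)"
  obtain P t where g_eq: "g = (P, t)" by (cases g)
  have "(\<lambda>x. - shift (- t) P x) \<in> K"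
    using g function_group_uminus[OF K function_group_shift[OF K, of P "- t"]]
    by (simp add: g_eq)
  moreover have "((\<lambda>x. - shift (- t) P x), - t) \<otimes>\<^bsub>Fg K\<^esub> g = \<one>\<^bsub>Fg K\<^esub>"
    by (simp add: g_eq)
  ultimately show "\<exists>h \<in> carrier (Fg K). h \<otimes>\<^bsub>Fg K\<^esub> g = \<one>\<^bsub>Fg K\<^esub>"
    by (metis Fg_carrier)
qed

lemma aQ_in_std_compl: "aQ Q t \<in> std_compl Q"
  by (auto simp: std_compl_def)

lemma aQ_in_carrier:
  assumes "function_group K" "Q \<in> K"
  shows "aQ Q t \<in> carrier (Fg K)"
  using function_group_diff[OF assms(1,2) function_group_shift[OF assms]]
  by (simp add: aQ_def)

lemma aQ_mult: "aQ Q s \<otimes>\<^bsub>Fg K\<^esub> aQ Q t = aQ Q (s + t)"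
  by (simp add: aQ_def fun_eq_iff algebra_simps)

lemma aQ_zero: "aQ Q 0 = \<one>\<^bsub>Fg K\<^esub>"
  by (simp add: aQ_def)

lemma std_compl_subgroup:
  assumes K: "function_group K" and Q: "Q \<in> K"
  shows "subgroup (std_compl Q) (Fg K)"
proof -
  interpret Fg: group "Fg K" using group_Fg[OF K] .
  have inv_aQ: "inv\<^bsub>Fg K\<^esub> (aQ Q t) = aQ Q (- t)" for t
  proof -
    have "aQ Q (- t) \<otimes>\<^bsub>Fg K\<^esub> aQ Q t = \<one>\<^bsub>Fg K\<^esub>"
      by (simp only: aQ_mult aQ_zero add.left_inverse)
    then show ?thesis
      using Fg.inv_equality aQ_in_carrier[OF K Q] by blast
  qed
  show ?thesis
  proof (rule Fg.subgroupI)
    show "std_compl Q \<subseteq> carrier (Fg K)"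
      using aQ_in_carrier[OF K Q] by (auto simp: std_compl_def)
    show "std_compl Q \<noteq> {}"
      using aQ_in_std_compl by blast
  next
    fix g assume "g \<in> std_compl Q"
    then show "inv\<^bsub>Fg K\<^esub> g \<in> std_compl Q"
      by (auto simp: std_compl_def inv_aQ)
  next
    fix g h assume "g \<in> std_compl Q" "h \<in> std_compl Q"
    then show "g \<otimes>\<^bsub>Fg K\<^esub> h \<in> std_compl Q"
      by (auto simp: std_compl_def aQ_mult)
  qed
qed

definition level :: "('a::ab_group_add \<Rightarrow> 'b::ab_group_add) \<Rightarrow> 'a \<times> 'b \<Rightarrow> 'b" where
  "level Q p = snd p - Q (fst p)"

lemma level_shift_act:
  "level Q (shift_act (P, t) (x, y)) = level Q (x, y) + (P (x + t) - Q (x + t) + Q x)"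
  by (simp add: level_def shift_act_def algebra_simps)

lemma level_preserving_iff:
  "(\<forall>p. level Q (shift_act g p) = level Q p) \<longleftrightarrow> g \<in> std_compl Q"
proof
  assume preserve: "\<forall>p. level Q (shift_act g p) = level Q p"
  obtain P t where g: "g = (P, t)" by (cases g)
  have "P z = Q z - Q (z - t)" for z
    using preserve[rule_format, of "(z - t, 0)"] by (simp add: g level_shift_act algebra_simps)
  then have "g = aQ Q t"
    by (simp add: g aQ_def fun_eq_iff)
  then show "g \<in> std_compl Q"
    using aQ_in_std_compl by simp
next
  assume "g \<in> std_compl Q"
  then obtain t where "g = aQ Q t" by (auto simp: std_compl_def)
  then show "\<forall>p. level Q (shift_act g p) = level Q p"
    by (auto simp: aQ_def level_shift_act)
qed

lemma orbitI: "h \<in> H \<Longrightarrow> shift_act h p \<in> orbit H p"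
  unfolding orbit_def by blast

text \<open>The \<open>A\<^sub>Q\<close>-orbits are the level sets: \<open>a\<^sub>Q\<^sub>,\<^sub>t\<close> carries \<open>(x,y)\<close> to the unique
  point above \<open>x + t\<close> on the same level.\<close>

lemma orbit_std_compl:
  "orbit (std_compl Q) p = {p'. level Q p' = level Q p}"
proof (intro equalityI subsetI)
  fix p' assume "p' \<in> orbit (std_compl Q) p"
  then obtain h where "h \<in> std_compl Q" "p' = shift_act h p"
    by (auto simp: orbit_def)
  then show "p' \<in> {p'. level Q p' = level Q p}"
    using level_preserving_iff[of Q h] by blast
next
  fix p' assume "p' \<in> {p'. level Q p' = level Q p}"
  then have "shift_act (aQ Q (fst p' - fst p)) p = p'"
    by (cases p, cases p') (simp add: shift_act_def aQ_def level_def algebra_simps)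
  then show "p' \<in> orbit (std_compl Q) p"
    using orbitI[OF aQ_in_std_compl, of Q "fst p' - fst p" p] by simp
qed

text \<open>An element mapping every \<open>A\<^sub>Q\<close>-orbit into itself preserves the level function,
  hence lies in \<open>A\<^sub>Q\<close>; in particular \<open>A\<^sub>Q\<close> is closed.\<close>

lemma std_compl_closed: "closed_subgroup K (std_compl Q)"
  unfolding closed_subgroup_def
proof (intro ballI impI)
  fix g assume "\<forall>p. shift_act g ` orbit (std_compl Q) p = orbit (std_compl Q) p"
  moreover have "p \<in> orbit (std_compl Q) p" for p
    by (simp add: orbit_std_compl)
  ultimately have "\<forall>p. level Q (shift_act g p) = level Q p"
    by (metis (mono_tags) image_eqI mem_Collect_eq orbit_std_compl)
  then show "g \<in> std_compl Q"
    using level_preserving_iff by blast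
qed

theorem proposition6:
  fixes K :: "(('a::{finite,ab_group_add}) \<Rightarrow> ('b::{finite,ab_group_add})) set"
    and Q :: "'a \<Rightarrow> 'b"
  assumes "function_group K"
    and "Q \<in> K"
  shows "subgroup (std_compl Q) (Fg K)
       \<and> closed_subgroup K (std_compl Q)
       \<and> (\<forall>x y. orbit (std_compl Q) (x, y) = {(x', y'). y' - Q x' = y - Q x})"
proof (intro conjI allI)
  show "subgroup (std_compl Q) (Fg K)"
    using std_compl_subgroup[OF assms] .
  show "closed_subgroup K (std_compl Q)"
    by (rule std_compl_closed)
  show "orbit (std_compl Q) (x, y) = {(x', y'). y' - Q x' = y - Q x}" for x y
    by (auto simp: orbit_std_compl level_def)
qed

end
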